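(* Let $\Gamma$ be a residually finite countable discrete group and $\Gamma_n\to e$. For $f\in1+pM_r(c_0(\Gamma,\mathbb{Z}_p))$ let $f^{(n)}\in1+pM_r(\mathbb{Z}_p\Gamma^{(n)})$ be its image, where $\Gamma^{(n)}=\Gamma/\Gamma_n$. Then \[ \log_p\det\nolimits_\Gamma f=\lim_{n\to\infty}\log_p\det\nolimits_{\Gamma^{(n)}}f^{(n)}\quad\text{in }\mathbb{Z}_p. \]
   Context: $\Gamma_n\to e$ means a sequence of normal subgroups of finite index in $\Gamma$ such that only the neutral element $e$ lies in infinitely many $\Gamma_n$. $c_0(\Gamma)$ is the $\mathbb{Q}_p$-algebra of formal series $\sum x_\gamma\gamma$, $x_\gamma\in\mathbb{Q}_p$, $|x_\gamma|_p\to0$ as $\gamma\to\infty$ (for each $\varepsilon>0$ only finitely many $|x_\gamma|_p\ge\varepsilon$), with convolution product and norm $\max|x_\gamma|_p$; $c_0(\Gamma,\mathbb{Z}_p)$ the subring of norm $\le1$ elements. For a normal subgroup $N$ the reduction $c_0(\Gamma)\to c_0(\Gamma/N)$, $\sum x_\gamma\gamma\mapsto\sum x_\gamma\,\gamma N$, is applied entrywise to matrices. $\mathrm{tr}_\Gamma:M_r(c_0(\Gamma))\to\mathbb{Q}_p$ sends $(f_{ij})$ to $\sum_i$(coefficient of $e$ in $f_{ii}$). For $u\in1+pM_r(c_0(\Gamma,\mathbb{Z}_p))$, $\log u=-\sum_{\nu\ge1}(1-u)^\nu/\nu$ and $\log_p\det_\Gamma u:=\mathrm{tr}_\Gamma(\log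 u)$ (same definition for the finite groups $\Gamma^{(n)}$). *)

theory Defs
  imports "HOL-Algebra.Algebra" "HOL-Library.Countable_Set"
begin

text \<open>A field of characteristic 0 with an absolute value nv is (isometrically
isomorphic to) Q_p iff nv is a non-archimedean absolute value with nv p = 1/p,
the field is complete for nv and Q is dense in it (Ostrowski + uniqueness of
completions).\<close>

definition nv_cauchy :: "('a::field_char_0 \<Rightarrow> real) \<Rightarrow> (nat \<Rightarrow> 'a) \<Rightarrow> bool" where
  "nv_cauchy nv xs \<longleftrightarrow> (\<forall>e>0. \<exists>N. \<forall>m\<ge>N. \<forall>n\<ge>N. nv (xs m - xs n) < e)"

definition nv_tendsto :: "('a::field_char_0 \<Rightarrow> real) \<Rightarrow> (nat \<Rightarrow> 'a) \<Rightarrow> 'a \<Rightarrow> bool" where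
  "nv_tendsto nv xs L \<longleftrightarrow> (\<lambda>n. nv (xs n - L)) \<longlonglongrightarrow> 0"

definition padic_field :: "nat \<Rightarrow> ('a::field_char_0 \<Rightarrow> real) \<Rightarrow> bool" where
  "padic_field p nv \<longleftrightarrow> Factorial_Ring.prime p
     \<and> (\<forall>x. nv x \<ge> 0) \<and> (\<forall>x. nv x = 0 \<longleftrightarrow> x = 0)
     \<and> (\<forall>x y. nv (x * y) = nv x * nv y)
     \<and> (\<forall>x y. nv (x + y) \<le> max (nv x) (nv y))
     \<and> nv (of_nat p) = 1 / real p
     \<and> (\<forall>xs. nv_cauchy nv xs \<longrightarrow> (\<exists>L. nv_tendsto nv xs L))
     \<and> (\<forall>x. \<forall>e>0. \<exists>q::rat. nv (x - of_rat q) < e)"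

definition nv_lim :: "('a::field_char_0 \<Rightarrow> real) \<Rightarrow> (nat \<Rightarrow> 'a) \<Rightarrow> 'a" where
  "nv_lim nv xs = (THE L. nv_tendsto nv xs L)"

definition nv_has_sum :: "('a::field_char_0 \<Rightarrow> real) \<Rightarrow> ('b \<Rightarrow> 'a) \<Rightarrow> 'b set \<Rightarrow> 'a \<Rightarrow> bool" where
  "nv_has_sum nv f S s \<longleftrightarrow> (\<forall>e>0. \<exists>F0. finite F0 \<and> F0 \<subseteq> S \<and>
      (\<forall>F. finite F \<and> F0 \<subseteq> F \<and> F \<subseteq> S \<longrightarrow> nv (sum f F - s) < e))"

definition nv_sum :: "('a::field_char_0 \<Rightarrow> real) \<Rightarrow> ('b \<Rightarrow> 'a) \<Rightarrow> 'b set \<Rightarrow> 'a" where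
  "nv_sum nv f S = (THE s. nv_has_sum nv f S s)"

definition residually_finite :: "('g, 'c) monoid_scheme \<Rightarrow> bool" where
  "residually_finite G \<longleftrightarrow> (\<forall>g\<in>carrier G. g \<noteq> \<one>\<^bsub>G\<^esub> \<longrightarrow>
      (\<exists>N. N \<lhd> G \<and> finite (carrier (G Mod N)) \<and> g \<notin> N))"

definition tends_to_e :: "('g, 'c) monoid_scheme \<Rightarrow> (nat \<Rightarrow> 'g set) \<Rightarrow> bool" where
  "tends_to_e G \<Gamma>s \<longleftrightarrow> (\<forall>n. \<Gamma>s n \<lhd> G \<and> finite (carrier (G Mod \<Gamma>s n)))
      \<and> (\<forall>g\<in>carrier G. infinite {n. g \<in> \<Gamma>s n} \<longrightarrow> g = \<one>\<^bsub>G\<^esub>)"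

definition c0 :: "('g, 'c) monoid_scheme \<Rightarrow> ('a::field_char_0 \<Rightarrow> real) \<Rightarrow> ('g \<Rightarrow> 'a) \<Rightarrow> bool" where
  "c0 G nv x \<longleftrightarrow> (\<forall>g. g \<notin> carrier G \<longrightarrow> x g = 0)
      \<and> (\<forall>e>0. finite {g\<in>carrier G. nv (x g) \<ge> e})"

definition conv :: "('g, 'c) monoid_scheme \<Rightarrow> ('a::field_char_0 \<Rightarrow> real) \<Rightarrow> ('g \<Rightarrow> 'a) \<Rightarrow> ('g \<Rightarrow> 'a) \<Rightarrow> 'g \<Rightarrow> 'a" where
  "conv G nv x y g = (if g \<in> carrier G then
      nv_sum nv (\<lambda>a. x a * y (inv\<^bsub>G\<^esub> a \<otimes>\<^bsub>G\<^esub> g)) (carrier G) else 0)"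

type_synonym ('g, 'a) gmat = "nat \<Rightarrow> nat \<Rightarrow> 'g \<Rightarrow> 'a"

definition mone :: "('g, 'c) monoid_scheme \<Rightarrow> ('g, 'a::field_char_0) gmat" where
  "mone G i j g = (if i = j \<and> g = \<one>\<^bsub>G\<^esub> then 1 else 0)"

definition mminus :: "('g, 'a::field_char_0) gmat \<Rightarrow> ('g, 'a) gmat \<Rightarrow> ('g, 'a) gmat" where
  "mminus A B i j g = A i j g - B i j g"

definition mmul :: "('g, 'c) monoid_scheme \<Rightarrow> ('a::field_char_0 \<Rightarrow> real) \<Rightarrow> nat \<Rightarrow>
    ('g, 'a) gmat \<Rightarrow> ('g, 'a) gmat \<Rightarrow> ('g, 'a) gmat" where
  "mmul G nv r A B i j g = (\<Sum>k<r. conv G nv (A i k) (B k j) g)"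

fun mpow :: "('g, 'c) monoid_scheme \<Rightarrow> ('a::field_char_0 \<Rightarrow> real) \<Rightarrow> nat \<Rightarrow>
    ('g, 'a) gmat \<Rightarrow> nat \<Rightarrow> ('g, 'a) gmat" where
  "mpow G nv r A 0 = mone G"
| "mpow G nv r A (Suc n) = mmul G nv r (mpow G nv r A n) A"

text \<open>log u = - sum_{nu>=1} (1-u)^nu / nu, taken entrywise and coefficientwise
(norm convergence in c_0 implies coefficientwise convergence to the same limit).\<close>
definition mlog :: "('g, 'c) monoid_scheme \<Rightarrow> ('a::field_char_0 \<Rightarrow> real) \<Rightarrow> nat \<Rightarrow>
    ('g, 'a) gmat \<Rightarrow> ('g, 'a) gmat" where
  "mlog G nv r u i j g = nv_lim nv (\<lambda>n. - (\<Sum>\<nu>\<in>{1..n}.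
       mpow G nv r (mminus (mone G) u) \<nu> i j g / of_nat \<nu>))"

definition trG :: "('g, 'c) monoid_scheme \<Rightarrow> nat \<Rightarrow> ('g, 'a::field_char_0) gmat \<Rightarrow> 'a" where
  "trG G r A = (\<Sum>i<r. A i i \<one>\<^bsub>G\<^esub>)"

definition log_det :: "('g, 'c) monoid_scheme \<Rightarrow> ('a::field_char_0 \<Rightarrow> real) \<Rightarrow> nat \<Rightarrow>
    ('g, 'a) gmat \<Rightarrow> 'a" where
  "log_det G nv r u = trG G r (mlog G nv r u)"

definition one_plus_p_int :: "nat \<Rightarrow> ('g, 'c) monoid_scheme \<Rightarrow> ('a::field_char_0 \<Rightarrow> real) \<Rightarrow> nat \<Rightarrow>
    ('g, 'a) gmat \<Rightarrow> bool" where
  "one_plus_p_int p G nv r f \<longleftrightarrow> (\<exists>A. (\<forall>i<r. \<forall>j<r. c0 G nv (A i j) \<and> (\<forall>g. nv (A i j g) \<le> 1)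
      \<and> (\<forall>g. f i j g = mone G i j g + of_nat p * A i j g)))"

text \<open>Reduction c_0(Gamma) \<rightarrow> c_0(Gamma/N), applied entrywise; the coefficient
of a coset C is the sum of the coefficients over C.\<close>
definition mreduce :: "('a::field_char_0 \<Rightarrow> real) \<Rightarrow> ('g, 'a) gmat \<Rightarrow> ('g set, 'a) gmat" where
  "mreduce nv f i j C = nv_sum nv (f i j) C"

end

(*
  Write f = 1 - D. All coefficients of D have absolute value at most 1/p, so by the
  ultrametric inequality all coefficients of D^k have absolute value at most p^-k, and the
  k-th term of the logarithm series is at most k p^-k, uniformly in n.
  Reduction modulo a normal subgroup N is multiplicative on c_0, so the coefficient of the
  identity coset in the k-th power of the reduced matrix is the sum of the coefficients of
  D^k over N.  Since D^k lies in c_0 and only e lies in infinitely many Gamma_n, these sums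
  tend to the coefficient of D^k at e.  Termwise convergence under the uniform null bound
  k p^-k (Tannery's theorem) then passes to the logarithms.
*)
theory Submission
  imports Defs
begin

section \<open>Complete non-archimedean absolute values\<close>

locale complete_ultrametric_abs =
  fixes nv :: "'a::field_char_0 \<Rightarrow> real"
  assumes nv_nonneg: "\<And>x. 0 \<le> nv x"
    and nv_eq_0_iff: "\<And>x. nv x = 0 \<longleftrightarrow> x = 0"
    and nv_mult: "\<And>x y. nv (x * y) = nv x * nv y"
    and nv_add_le_max: "\<And>x y. nv (x + y) \<le> max (nv x) (nv y)"
    and nv_cauchy_convergent: "\<And>xs. nv_cauchy nv xs \<Longrightarrow> \<exists>L. nv_tendsto nv xs L"
begin

lemma nv_0 [simp]: "nv 0 = 0"
  using nv_eq_0_iff by simp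

lemma nv_1 [simp]: "nv 1 = 1"
proof -
  have "nv 1 = nv 1 * nv 1" using nv_mult[of 1 1] by simp
  moreover have "nv 1 \<noteq> 0" using nv_eq_0_iff by simp
  ultimately show ?thesis by (metis mult_cancel_right1)
qed

lemma nv_minus [simp]: "nv (- x) = nv x"
proof -
  have "nv (-1) * nv (-1) = 1" using nv_mult[of "-1" "-1"] by simp
  then have "nv (-1) = 1"
    using nv_nonneg[of "-1"] power2_eq_1_iff[of "nv (-1)"] by (auto simp: power2_eq_square)
  then show ?thesis using nv_mult[of "-1" x] by simp
qed

lemma nv_minus_commute: "nv (x - y) = nv (y - x)"
  by (metis minus_diff_eq nv_minus)

lemma nv_diff_le_max: "nv (x - y) \<le> max (nv x) (nv y)"
  using nv_add_le_max[of x "- y"] by simp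

lemma nv_add_less: "nv x < e \<Longrightarrow> nv y < e \<Longrightarrow> nv (x + y) < e"
  using nv_add_le_max[of x y] by simp

lemma nv_add_le: "nv (x + y) \<le> nv x + nv y"
  using nv_add_le_max[of x y] nv_nonneg[of x] nv_nonneg[of y] by linarith

lemma nv_triangle: "nv (x - z) \<le> nv (x - y) + nv (y - z)"
  using nv_add_le[of "x - y" "y - z"] by simp

lemma nv_divide: "nv (x / y) = nv x / nv y"
proof (cases "y = 0")
  case False
  then have "nv x = nv (x / y) * nv y" using nv_mult[of "x / y" y] by simp
  then show ?thesis using False nv_eq_0_iff by simp
qed simp

lemma nv_sum_le:
  assumes "0 \<le> B" "\<And>x. x \<in> F \<Longrightarrow> nv (f x) \<le> B"
  shows "nv (sum f F) \<le> B"
  using assms(2)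
proof (induction F rule: infinite_finite_induct)
  case (insert x F)
  have "nv (f x) \<le> B" "nv (sum f F) \<le> B" using insert by auto
  then show ?case using insert.hyps nv_add_le_max[of "f x" "sum f F"] by simp
qed (use assms(1) in simp_all)

lemma nv_sum_less:
  assumes "0 < e" "\<And>x. x \<in> F \<Longrightarrow> nv (f x) < e"
  shows "nv (sum f F) < e"
  using assms(2)
proof (induction F rule: infinite_finite_induct)
  case (insert x F)
  have "nv (f x) < e" "nv (sum f F) < e" using insert by auto
  then show ?case using insert.hyps nv_add_le_max[of "f x" "sum f F"] by simp
qed (use assms(1) in simp_all)

lemma nv_of_nat_le_1: "nv (of_nat n) \<le> 1"
proof (induction n)
  case (Suc n)
  have "nv (of_nat (Suc n)) \<le> max (nv 1) (nv (of_nat n))"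
    using nv_add_le_max[of 1 "of_nat n"] by simp
  then show ?case using Suc by simp
qed simp

lemma nv_tendstoI:
  assumes "\<And>e. 0 < e \<Longrightarrow> \<forall>\<^sub>F n in sequentially. nv (xs n - L) \<le> e"
  shows "nv_tendsto nv xs L"
  unfolding nv_tendsto_def
proof (rule order_tendstoI)
  fix a :: real assume "a < 0"
  then have "a < nv (xs n - L)" for n using nv_nonneg[of "xs n - L"] by linarith
  then show "\<forall>\<^sub>F n in sequentially. a < nv (xs n - L)" by (intro always_eventually allI)
next
  fix e :: real assume "0 < e"
  then have "\<forall>\<^sub>F n in sequentially. nv (xs n - L) \<le> e / 2" by (intro assms) simp
  then show "\<forall>\<^sub>F n in sequentially. nv (xs n - L) < e"
    by (rule eventually_mono) (use \<open>0 < e\<close> in linarith)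
qed

lemma nv_tendsto_unique:
  assumes "nv_tendsto nv xs L" "nv_tendsto nv xs M"
  shows "L = M"
proof -
  have lim: "(\<lambda>n. nv (xs n - L) + nv (xs n - M)) \<longlonglongrightarrow> 0"
    using tendsto_add_zero assms unfolding nv_tendsto_def by blast
  have "nv (L - M) \<le> nv (xs n - L) + nv (xs n - M)" for n
    using nv_triangle[where x = L and y = "xs n" and z = M] nv_minus_commute[of L "xs n"] by simp
  then have "nv (L - M) \<le> 0" by (intro LIMSEQ_le_const[OF lim] exI[of _ 0] allI impI)
  then show ?thesis using nv_nonneg[of "L - M"] nv_eq_0_iff by simp
qed

lemma nv_lim_eqI: "nv_tendsto nv xs L \<Longrightarrow> nv_lim nv xs = L"
  unfolding nv_lim_def using nv_tendsto_unique by blast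

lemma nv_tendsto_add:
  assumes "nv_tendsto nv xs L" "nv_tendsto nv ys M"
  shows "nv_tendsto nv (\<lambda>n. xs n + ys n) (L + M)"
proof -
  have lim: "(\<lambda>n. nv (xs n - L) + nv (ys n - M)) \<longlonglongrightarrow> 0"
    using tendsto_add_zero assms unfolding nv_tendsto_def by blast
  have "nv (xs n + ys n - (L + M)) \<le> nv (xs n - L) + nv (ys n - M)" for n
    using nv_add_le[of "xs n - L" "ys n - M"] by (simp add: algebra_simps)
  then show ?thesis
    unfolding nv_tendsto_def
    by (intro tendsto_sandwich[OF _ _ tendsto_const lim] always_eventually allI nv_nonneg)
qed

lemma nv_tendsto_sum:
  assumes "finite I" "\<And>i. i \<in> I \<Longrightarrow> nv_tendsto nv (xs i) (L i)"
  shows "nv_tendsto nv (\<lambda>n. \<Sum>i\<in>I. xs i n) (\<Sum>i\<in>I. L i)"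
  using assms
proof (induction I rule: finite_induct)
  case empty
  then show ?case by (simp add: nv_tendsto_def)
next
  case (insert x F)
  then show ?case
    using nv_tendsto_add[of "xs x" "L x" "\<lambda>n. \<Sum>i\<in>F. xs i n" "\<Sum>i\<in>F. L i"] by simp
qed

lemma nv_tendsto_diff_le:
  assumes "nv_tendsto nv xs L" "nv_tendsto nv ys M" "\<And>n. nv (xs n - ys n) \<le> B"
  shows "nv (L - M) \<le> B"
proof -
  have lim: "(\<lambda>n. B + (nv (xs n - L) + nv (ys n - M))) \<longlonglongrightarrow> B"
    using tendsto_add[OF tendsto_const[of B] tendsto_add[OF assms(1,2)[unfolded nv_tendsto_def]]]
    by simp
  have "nv (L - M) \<le> B + (nv (xs n - L) + nv (ys n - M))" for n
    using nv_triangle[where x = L and y = "xs n" and z = M]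
      nv_triangle[where x = "xs n" and y = "ys n" and z = M] nv_minus_commute[of L "xs n"]
      assms(3)[of n] by linarith
  then show ?thesis by (intro LIMSEQ_le_const[OF lim] exI[of _ 0] allI impI)
qed

lemma nv_cauchyI:
  assumes "\<And>e. 0 < e \<Longrightarrow> \<exists>N. \<forall>n\<ge>N. \<forall>m\<ge>n. nv (xs m - xs n) < e"
  shows "nv_cauchy nv xs"
  unfolding nv_cauchy_def
proof (intro allI impI)
  fix e :: real assume "0 < e"
  then obtain N where N: "\<forall>n\<ge>N. \<forall>m\<ge>n. nv (xs m - xs n) < e" using assms by blast
  show "\<exists>N. \<forall>m\<ge>N. \<forall>n\<ge>N. nv (xs m - xs n) < e"
  proof (intro exI allI impI)
    fix m n assume "N \<le> m" "N \<le> n"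
    show "nv (xs m - xs n) < e"
    proof (cases "n \<le> m")
      case True
      then show ?thesis using N \<open>N \<le> n\<close> by blast
    next
      case False
      then show ?thesis using N \<open>N \<le> m\<close> nv_minus_commute[of "xs m" "xs n"] by auto
    qed
  qed
qed

lemma nv_series_convergent:
  assumes "\<And>e. 0 < e \<Longrightarrow> \<exists>M. \<forall>k\<ge>M. nv (u k) < e"
  shows "\<exists>L. nv_tendsto nv (\<lambda>n. \<Sum>k\<in>{1..n}. u k) L"
proof (rule nv_cauchy_convergent, rule nv_cauchyI)
  fix e :: real assume e: "0 < e"
  obtain M where M: "\<And>k. k \<ge> M \<Longrightarrow> nv (u k) < e" using assms[OF e] by blast
  have "nv ((\<Sum>k\<in>{1..m}. u k) - (\<Sum>k\<in>{1..n}. u k)) < e" if "M \<le> n" "n \<le> m" for m n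
  proof -
    have "(\<Sum>k\<in>{1..m}. u k) - (\<Sum>k\<in>{1..n}. u k) = (\<Sum>k\<in>{1..m} - {1..n}. u k)"
      using that by (subst sum_diff) auto
    also have "nv \<dots> < e" by (rule nv_sum_less[OF e]) (use M that in auto)
    finally show ?thesis .
  qed
  then show "\<exists>N. \<forall>n\<ge>N. \<forall>m\<ge>n. nv ((\<Sum>k\<in>{1..m}. u k) - (\<Sum>k\<in>{1..n}. u k)) < e"
    by blast
qed

text \<open>Tannery's theorem (dominated convergence for series).\<close>

lemma nv_tendsto_series_limits:
  assumes partial: "\<And>n. nv_tendsto nv (\<lambda>m. \<Sum>k\<in>{1..m}. u n k) (S n)"
    and partial_lim: "nv_tendsto nv (\<lambda>m. \<Sum>k\<in>{1..m}. v k) T"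
    and dominated: "\<And>n k. nv (u n k) \<le> \<beta> k" "\<And>k. nv (v k) \<le> \<beta> k"
    and null: "\<beta> \<longlonglongrightarrow> 0"
    and termwise: "\<And>k. nv_tendsto nv (\<lambda>n. u n k) (v k)"
  shows "nv_tendsto nv S T"
proof (rule nv_tendstoI)
  fix e :: real assume e: "0 < e"
  obtain M where M: "\<And>k. k \<ge> M \<Longrightarrow> \<beta> k < e"
    using order_tendstoD(2)[OF null e] unfolding eventually_sequentially by blast
  have "\<forall>\<^sub>F n in sequentially. nv (u n k - v k) < e" for k
    using termwise[of k] e unfolding nv_tendsto_def by (rule order_tendstoD(2))
  then have "\<forall>\<^sub>F n in sequentially. \<forall>k\<in>{..<M}. nv (u n k - v k) < e"
    by (intro eventually_ball_finite) auto
  then show "\<forall>\<^sub>F n in sequentially. nv (S n - T) \<le> e"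
  proof eventually_elim
    case (elim n)
    have "nv (u n k - v k) \<le> e" for k
    proof (cases "k < M")
      case False
      then have "\<beta> k < e" using M by simp
      then show ?thesis using nv_diff_le_max[of "u n k" "v k"] dominated(1)[of n k] dominated(2)[of k] by simp
    qed (use elim in \<open>meson lessThan_iff less_imp_le\<close>)
    then have "nv ((\<Sum>k\<in>{1..m}. u n k) - (\<Sum>k\<in>{1..m}. v k)) \<le> e" for m
      unfolding sum_subtractf[symmetric] by (intro nv_sum_le) (use e in auto)
    then show ?case by (rule nv_tendsto_diff_le[OF partial partial_lim])
  qed
qed

end

section \<open>Unconditional sums\<close>

definition c0_on :: "('a::field_char_0 \<Rightarrow> real) \<Rightarrow> ('b \<Rightarrow> 'a) \<Rightarrow> 'b set \<Rightarrow> bool" where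
  "c0_on nv f S \<longleftrightarrow> (\<forall>e>0. finite {x\<in>S. e \<le> nv (f x)})"

lemma c0_imp_c0_on: "c0 G nv x \<Longrightarrow> c0_on nv x (carrier G)"
  unfolding c0_def c0_on_def by simp

lemma c0_on_subset:
  assumes "c0_on nv f S" "T \<subseteq> S"
  shows "c0_on nv f T"
  unfolding c0_on_def
proof (intro allI impI)
  fix e :: real assume "0 < e"
  then have "finite {x\<in>S. e \<le> nv (f x)}" using assms(1) by (simp add: c0_on_def)
  then show "finite {x\<in>T. e \<le> nv (f x)}" by (rule finite_subset[rotated]) (use assms(2) in auto)
qed

context complete_ultrametric_abs
begin

lemma c0_on_bounded:
  assumes "c0_on nv f S"
  obtains B where "0 < B" "\<And>x. x \<in> S \<Longrightarrow> nv (f x) \<le> B"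
proof
  define A where "A = {x\<in>S. 1 \<le> nv (f x)}"
  have "finite A" using assms unfolding c0_on_def A_def by auto
  show "0 < 1 + (\<Sum>x\<in>A. nv (f x))" using nv_nonneg by (simp add: sum_nonneg add_pos_nonneg)
  fix x assume "x \<in> S"
  show "nv (f x) \<le> 1 + (\<Sum>x\<in>A. nv (f x))"
  proof (cases "x \<in> A")
    case True
    then show ?thesis using \<open>finite A\<close> member_le_sum[of x A "\<lambda>x. nv (f x)"] nv_nonneg by simp
  next
    case False
    then have "nv (f x) < 1" using \<open>x \<in> S\<close> by (simp add: A_def)
    moreover have "0 \<le> (\<Sum>x\<in>A. nv (f x))" by (simp add: sum_nonneg nv_nonneg)
    ultimately show ?thesis by linarith
  qed
qed

lemma c0_on_add:
  assumes "c0_on nv f S" "c0_on nv g S"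
  shows "c0_on nv (\<lambda>x. f x + g x) S"
  unfolding c0_on_def
proof (intro allI impI)
  fix e :: real assume "0 < e"
  have "{x\<in>S. e \<le> nv (f x + g x)} \<subseteq> {x\<in>S. e \<le> nv (f x)} \<union> {x\<in>S. e \<le> nv (g x)}"
  proof
    fix x assume "x \<in> {x\<in>S. e \<le> nv (f x + g x)}"
    then have "x \<in> S" "e \<le> nv (f x + g x)" by auto
    then have "e \<le> max (nv (f x)) (nv (g x))" using nv_add_le_max[of "f x" "g x"] by linarith
    then show "x \<in> {x\<in>S. e \<le> nv (f x)} \<union> {x\<in>S. e \<le> nv (g x)}"
      using \<open>x \<in> S\<close> by (auto simp: le_max_iff_disj)
  qed
  moreover have "finite ({x\<in>S. e \<le> nv (f x)} \<union> {x\<in>S. e \<le> nv (g x)})"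
    using assms \<open>0 < e\<close> unfolding c0_on_def by auto
  ultimately show "finite {x\<in>S. e \<le> nv (f x + g x)}" using finite_subset by blast
qed

lemma c0_on_cmult:
  assumes "c0_on nv f S"
  shows "c0_on nv (\<lambda>x. c * f x) S"
  unfolding c0_on_def
proof (intro allI impI)
  fix e :: real assume e: "0 < e"
  have "{x\<in>S. e \<le> nv (c * f x)} \<subseteq> {x\<in>S. e / (nv c + 1) \<le> nv (f x)}"
  proof safe
    fix x assume "x \<in> S" "e \<le> nv (c * f x)"
    then have "e \<le> (nv c + 1) * nv (f x)"
      using nv_nonneg[of "f x"] nv_mult[of c "f x"] by (simp add: distrib_right)
    then show "e / (nv c + 1) \<le> nv (f x)" using nv_nonneg[of c] by (simp add: divide_le_eq mult.commute)
  qed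
  moreover have "finite {x\<in>S. e / (nv c + 1) \<le> nv (f x)}"
    using assms e nv_nonneg[of c] unfolding c0_on_def by auto
  ultimately show "finite {x\<in>S. e \<le> nv (c * f x)}" using finite_subset by blast
qed

lemma c0_on_diff:
  assumes "c0_on nv f S" "c0_on nv g S"
  shows "c0_on nv (\<lambda>x. f x - g x) S"
  using c0_on_add[OF assms(1) c0_on_cmult[OF assms(2), of "-1"]] by simp

lemma c0_on_sum:
  assumes "\<And>k. k \<in> K \<Longrightarrow> c0_on nv (f k) S"
  shows "c0_on nv (\<lambda>x. \<Sum>k\<in>K. f k x) S"
  using assms
proof (induction K rule: infinite_finite_induct)
  case (insert k K)
  then show ?case using c0_on_add[of "f k" S "\<lambda>x. \<Sum>k\<in>K. f k x"] by simp
qed (simp_all add: c0_on_def)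

lemma nv_has_sumE:
  assumes "nv_has_sum nv f S s" "0 < e"
  obtains F0 where "finite F0" "F0 \<subseteq> S"
    "\<And>F. finite F \<Longrightarrow> F0 \<subseteq> F \<Longrightarrow> F \<subseteq> S \<Longrightarrow> nv (sum f F - s) < e"
proof -
  have "\<exists>F0. finite F0 \<and> F0 \<subseteq> S \<and>
      (\<forall>F. finite F \<and> F0 \<subseteq> F \<and> F \<subseteq> S \<longrightarrow> nv (sum f F - s) < e)"
    using assms unfolding nv_has_sum_def by simp
  then obtain F0 where F0: "finite F0" "F0 \<subseteq> S"
    "\<forall>F. finite F \<and> F0 \<subseteq> F \<and> F \<subseteq> S \<longrightarrow> nv (sum f F - s) < e"
    by blast
  show ?thesis by (rule that[OF F0(1,2)]) (simp add: F0(3))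
qed

lemma nv_has_sum_unique:
  assumes "nv_has_sum nv f S s" "nv_has_sum nv f S t"
  shows "s = t"
proof -
  have "nv (s - t) < e" if e: "0 < e" for e
  proof -
    obtain F1 where F1: "finite F1" "F1 \<subseteq> S"
      "\<And>F. finite F \<Longrightarrow> F1 \<subseteq> F \<Longrightarrow> F \<subseteq> S \<Longrightarrow> nv (sum f F - s) < e"
      using nv_has_sumE[OF assms(1) e] by blast
    obtain F2 where F2: "finite F2" "F2 \<subseteq> S"
      "\<And>F. finite F \<Longrightarrow> F2 \<subseteq> F \<Longrightarrow> F \<subseteq> S \<Longrightarrow> nv (sum f F - t) < e"
      using nv_has_sumE[OF assms(2) e] by blast
    have "nv (s - sum f (F1 \<union> F2)) < e" "nv (sum f (F1 \<union> F2) - t) < e"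
      using F1 F2 nv_minus_commute[of s] by auto
    then have "nv ((s - sum f (F1 \<union> F2)) + (sum f (F1 \<union> F2) - t)) < e" by (rule nv_add_less)
    then show ?thesis by simp
  qed
  then have "\<not> 0 < nv (s - t)" by force
  then have "nv (s - t) = 0" using nv_nonneg[of "s - t"] by linarith
  then show ?thesis using nv_eq_0_iff by simp
qed

lemma nv_sum_eqI: "nv_has_sum nv f S s \<Longrightarrow> nv_sum nv f S = s"
  unfolding nv_sum_def using nv_has_sum_unique by blast

lemma nv_has_sum_cong:
  assumes "\<And>x. x \<in> S \<Longrightarrow> f x = g x" "nv_has_sum nv f S s"
  shows "nv_has_sum nv g S s"
  unfolding nv_has_sum_def
proof (intro allI impI)
  fix e :: real assume "0 < e"
  then obtain F0 where F0: "finite F0" "F0 \<subseteq> S"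
    "\<And>F. finite F \<Longrightarrow> F0 \<subseteq> F \<Longrightarrow> F \<subseteq> S \<Longrightarrow> nv (sum f F - s) < e"
    using nv_has_sumE[OF assms(2)] by blast
  have "sum f F = sum g F" if "F \<subseteq> S" for F
    using that assms(1) by (intro sum.cong) auto
  then show "\<exists>F0. finite F0 \<and> F0 \<subseteq> S \<and> (\<forall>F. finite F \<and> F0 \<subseteq> F \<and> F \<subseteq> S \<longrightarrow> nv (sum g F - s) < e)"
    using F0 by (intro exI[of _ F0]) auto
qed

lemma nv_sum_cong:
  assumes "\<And>x. x \<in> S \<Longrightarrow> f x = g x"
  shows "nv_sum nv f S = nv_sum nv g S"
proof -
  have "nv_has_sum nv f S = nv_has_sum nv g S"
    using nv_has_sum_cong[of S f g] nv_has_sum_cong[of S g f] assms by (auto simp: fun_eq_iff)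
  then show ?thesis unfolding nv_sum_def by simp
qed

lemma nv_sum_Diff_level_less:
  assumes "F \<subseteq> S" "1 / real (Suc k) \<le> e"
  shows "nv (sum f (F - {x\<in>S. 1 / real (Suc k) \<le> nv (f x)})) < e"
proof (rule nv_sum_less)
  show "0 < e" using assms(2) less_le_trans[of 0 "1 / real (Suc k)" e] by simp
next
  fix x assume "x \<in> F - {x\<in>S. 1 / real (Suc k) \<le> nv (f x)}"
  then have "nv (f x) < 1 / real (Suc k)" using assms(1) by auto
  then show "nv (f x) < e" using assms(2) by linarith
qed

lemma nv_cauchy_level_sums:
  assumes "c0_on nv f S"
  shows "nv_cauchy nv (\<lambda>k. sum f {x\<in>S. 1 / real (Suc k) \<le> nv (f x)})"
proof (rule nv_cauchyI)
  define Fk where "Fk k = {x\<in>S. 1 / real (Suc k) \<le> nv (f x)}" for k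
  fix e :: real assume "0 < e"
  then obtain N where N: "1 / real (Suc N) < e"
    using reals_Archimedean by (auto simp: inverse_eq_divide)
  have "nv (sum f (Fk m) - sum f (Fk n)) < e" if "N \<le> n" "n \<le> m" for m n
  proof -
    have "1 / real (Suc m) \<le> 1 / real (Suc n)" "1 / real (Suc n) \<le> 1 / real (Suc N)"
      using that by (simp_all add: frac_le)
    then have "Fk n \<subseteq> Fk m" unfolding Fk_def by auto
    moreover have "finite (Fk m)" using assms unfolding c0_on_def Fk_def by simp
    ultimately have "sum f (Fk m) - sum f (Fk n) = sum f (Fk m - Fk n)" by (simp add: sum_diff)
    also have "nv \<dots> < e"
      unfolding Fk_def using N \<open>1 / real (Suc n) \<le> 1 / real (Suc N)\<close>
      by (intro nv_sum_Diff_level_less) auto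
    finally show ?thesis .
  qed
  then show "\<exists>N. \<forall>n\<ge>N. \<forall>m\<ge>n. nv (sum f {x\<in>S. 1 / real (Suc m) \<le> nv (f x)}
      - sum f {x\<in>S. 1 / real (Suc n) \<le> nv (f x)}) < e"
    unfolding Fk_def by blast
qed

lemma nv_has_sum_exists:
  assumes "c0_on nv f S"
  shows "\<exists>s. nv_has_sum nv f S s"
proof -
  define Fk where "Fk k = {x\<in>S. 1 / real (Suc k) \<le> nv (f x)}" for k
  obtain L where L: "nv_tendsto nv (\<lambda>k. sum f (Fk k)) L"
    using nv_cauchy_convergent[OF nv_cauchy_level_sums[OF assms]] unfolding Fk_def by blast
  have "nv_has_sum nv f S L" unfolding nv_has_sum_def
  proof (intro allI impI)
    fix e :: real assume e: "0 < e"
    obtain K where K: "\<And>k. k \<ge> K \<Longrightarrow> nv (sum f (Fk k) - L) < e"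
      using order_tendstoD(2)[OF L[unfolded nv_tendsto_def] e] by (auto simp: eventually_sequentially)
    obtain N where N: "1 / real (Suc N) < e"
      using e reals_Archimedean by (auto simp: inverse_eq_divide)
    define k where "k = max K N"
    have k: "nv (sum f (Fk k) - L) < e" "1 / real (Suc k) < e"
      using K N frac_le[of 1 1 "real (Suc N)" "real (Suc k)"] unfolding k_def by auto
    have "nv (sum f F - L) < e" if F: "finite F" "Fk k \<subseteq> F" "F \<subseteq> S" for F
    proof -
      have eq: "sum f F - L = sum f (F - Fk k) + (sum f (Fk k) - L)"
        using F by (simp add: sum_diff)
      have "nv (sum f (F - Fk k)) < e"
        unfolding Fk_def using F(3) less_imp_le[OF k(2)] by (rule nv_sum_Diff_level_less)
      then show ?thesis unfolding eq using k(1) by (rule nv_add_less)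
    qed
    moreover have "finite (Fk k)" using assms unfolding c0_on_def Fk_def by simp
    ultimately show "\<exists>F0. finite F0 \<and> F0 \<subseteq> S \<and>
        (\<forall>F. finite F \<and> F0 \<subseteq> F \<and> F \<subseteq> S \<longrightarrow> nv (sum f F - L) < e)"
      by (intro exI[of _ "Fk k"]) (auto simp: Fk_def)
  qed
  then show ?thesis by blast
qed

lemma nv_has_sum_nv_sum: "c0_on nv f S \<Longrightarrow> nv_has_sum nv f S (nv_sum nv f S)"
  using nv_has_sum_exists nv_sum_eqI by metis

lemma nv_has_sum_bound:
  assumes "nv_has_sum nv f S s" "0 \<le> B" "\<And>x. x \<in> S \<Longrightarrow> nv (f x) \<le> B"
  shows "nv s \<le> B"
proof (rule field_le_epsilon)
  fix e :: real assume e: "0 < e"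
  obtain F0 where F0: "finite F0" "F0 \<subseteq> S"
    "\<And>F. finite F \<Longrightarrow> F0 \<subseteq> F \<Longrightarrow> F \<subseteq> S \<Longrightarrow> nv (sum f F - s) < e"
    using nv_has_sumE[OF assms(1) e] by blast
  have "nv (sum f F0 - s) < e" using F0 by blast
  moreover have "nv (sum f F0) \<le> B" using F0 assms by (intro nv_sum_le) auto
  moreover have "nv s \<le> max (nv (sum f F0)) (nv (sum f F0 - s))"
    using nv_diff_le_max[of "sum f F0" "sum f F0 - s"] by simp
  ultimately show "nv s \<le> B + e" using assms(2) e by (auto simp: max_def split: if_split_asm)
qed

lemma nv_sum_bound:
  assumes "c0_on nv f S" "0 \<le> B" "\<And>x. x \<in> S \<Longrightarrow> nv (f x) \<le> B"
  shows "nv (nv_sum nv f S) \<le> B"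
  using nv_has_sum_bound[OF nv_has_sum_nv_sum[OF assms(1)] assms(2,3)] .

lemma nv_has_sum_add:
  assumes "nv_has_sum nv f S s" "nv_has_sum nv g S t"
  shows "nv_has_sum nv (\<lambda>x. f x + g x) S (s + t)"
  unfolding nv_has_sum_def
proof (intro allI impI)
  fix e :: real assume e: "0 < e"
  obtain F1 where F1: "finite F1" "F1 \<subseteq> S"
    "\<And>F. finite F \<Longrightarrow> F1 \<subseteq> F \<Longrightarrow> F \<subseteq> S \<Longrightarrow> nv (sum f F - s) < e"
    using nv_has_sumE[OF assms(1) e] by blast
  obtain F2 where F2: "finite F2" "F2 \<subseteq> S"
    "\<And>F. finite F \<Longrightarrow> F2 \<subseteq> F \<Longrightarrow> F \<subseteq> S \<Longrightarrow> nv (sum g F - t) < e"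
    using nv_has_sumE[OF assms(2) e] by blast
  have "nv (sum (\<lambda>x. f x + g x) F - (s + t)) < e"
    if "finite F" "F1 \<union> F2 \<subseteq> F" "F \<subseteq> S" for F
  proof -
    have eq: "sum (\<lambda>x. f x + g x) F - (s + t) = (sum f F - s) + (sum g F - t)"
      by (simp add: sum.distrib)
    show ?thesis unfolding eq using F1(3)[of F] F2(3)[of F] that by (intro nv_add_less) auto
  qed
  then show "\<exists>F0. finite F0 \<and> F0 \<subseteq> S \<and> (\<forall>F. finite F \<and> F0 \<subseteq> F \<and> F \<subseteq> S \<longrightarrow>
      nv (sum (\<lambda>x. f x + g x) F - (s + t)) < e)"
    using F1 F2 by (intro exI[of _ "F1 \<union> F2"]) auto
qed

lemma nv_has_sum_cmult:
  assumes "nv_has_sum nv f S s"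
  shows "nv_has_sum nv (\<lambda>x. c * f x) S (c * s)"
  unfolding nv_has_sum_def
proof (intro allI impI)
  fix e :: real assume e: "0 < e"
  have e': "0 < e / (nv c + 1)" using e nv_nonneg[of c] by simp
  obtain F1 where F1: "finite F1" "F1 \<subseteq> S"
    "\<And>F. finite F \<Longrightarrow> F1 \<subseteq> F \<Longrightarrow> F \<subseteq> S \<Longrightarrow> nv (sum f F - s) < e / (nv c + 1)"
    using nv_has_sumE[OF assms e'] by blast
  have "nv (sum (\<lambda>x. c * f x) F - c * s) < e" if "finite F" "F1 \<subseteq> F" "F \<subseteq> S" for F
  proof -
    have "nv (sum (\<lambda>x. c * f x) F - c * s) = nv c * nv (sum f F - s)"
      by (simp add: sum_distrib_left right_diff_distrib nv_mult[symmetric])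
    also have "\<dots> \<le> nv c * (e / (nv c + 1))"
      using F1(3)[OF that] nv_nonneg[of c] by (intro mult_left_mono) auto
    also have "\<dots> = e * (nv c / (nv c + 1))" by simp
    also have "\<dots> < e * 1" using e nv_nonneg[of c] by (intro mult_strict_left_mono) auto
    finally show ?thesis by simp
  qed
  then show "\<exists>F0. finite F0 \<and> F0 \<subseteq> S \<and>
      (\<forall>F. finite F \<and> F0 \<subseteq> F \<and> F \<subseteq> S \<longrightarrow> nv (sum (\<lambda>x. c * f x) F - c * s) < e)"
    using F1 by blast
qed

lemma nv_has_sum_diff:
  assumes "nv_has_sum nv f S s" "nv_has_sum nv g S t"
  shows "nv_has_sum nv (\<lambda>x. f x - g x) S (s - t)"
  using nv_has_sum_add[OF assms(1) nv_has_sum_cmult[OF assms(2), of "-1"]] by simp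

lemma nv_has_sum_sum:
  assumes "finite K" "\<And>k. k \<in> K \<Longrightarrow> nv_has_sum nv (f k) S (s k)"
  shows "nv_has_sum nv (\<lambda>x. \<Sum>k\<in>K. f k x) S (\<Sum>k\<in>K. s k)"
  using assms
proof (induction K rule: finite_induct)
  case empty
  have "nv_has_sum nv (\<lambda>x. 0) S 0"
    unfolding nv_has_sum_def by (intro allI impI exI[of _ "{}"]) auto
  then show ?case by simp
next
  case (insert k K)
  then show ?case using nv_has_sum_add[of "f k" S "s k" "\<lambda>x. \<Sum>k\<in>K. f k x"] by simp
qed

lemma nv_has_sum_finite_support:
  assumes "finite T" "T \<subseteq> S" "\<And>x. x \<in> S - T \<Longrightarrow> f x = 0"
  shows "nv_has_sum nv f S (sum f T)"
  unfolding nv_has_sum_def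
proof (intro allI impI exI[of _ T] conjI)
  fix e :: real and F assume "0 < e" and F: "finite F \<and> T \<subseteq> F \<and> F \<subseteq> S"
  have "sum f F = sum f T" using F assms by (intro sum.mono_neutral_right) auto
  then show "nv (sum f F - sum f T) < e" using \<open>0 < e\<close> by simp
qed (use assms in auto)

lemma nv_has_sum_Diff_singleton:
  assumes "nv_has_sum nv f S s" "x \<in> S"
  shows "nv_has_sum nv f (S - {x}) (s - f x)"
  unfolding nv_has_sum_def
proof (intro allI impI)
  fix e :: real assume e: "0 < e"
  obtain F0 where F0: "finite F0" "F0 \<subseteq> S"
    "\<And>F. finite F \<Longrightarrow> F0 \<subseteq> F \<Longrightarrow> F \<subseteq> S \<Longrightarrow> nv (sum f F - s) < e"
    using nv_has_sumE[OF assms(1) e] by blast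
  have "nv (sum f F - (s - f x)) < e" if "finite F" "F0 - {x} \<subseteq> F" "F \<subseteq> S - {x}" for F
  proof -
    have "sum f (insert x F) = f x + sum f F" using that by (subst sum.insert) auto
    moreover have "nv (sum f (insert x F) - s) < e" using F0(3)[of "insert x F"] that assms(2) by auto
    ultimately show ?thesis by (simp add: algebra_simps)
  qed
  then show "\<exists>F0. finite F0 \<and> F0 \<subseteq> S - {x} \<and>
      (\<forall>F. finite F \<and> F0 \<subseteq> F \<and> F \<subseteq> S - {x} \<longrightarrow> nv (sum f F - (s - f x)) < e)"
    using F0 by (intro exI[of _ "F0 - {x}"]) auto
qed

lemma nv_has_sum_reindex:
  assumes "inj_on h A" "nv_has_sum nv (\<lambda>x. f (h x)) A s"
  shows "nv_has_sum nv f (h ` A) s"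
  unfolding nv_has_sum_def
proof (intro allI impI)
  fix e :: real assume e: "0 < e"
  obtain F1 where F1: "finite F1" "F1 \<subseteq> A"
    "\<And>F. finite F \<Longrightarrow> F1 \<subseteq> F \<Longrightarrow> F \<subseteq> A \<Longrightarrow> nv (sum (\<lambda>x. f (h x)) F - s) < e"
    using nv_has_sumE[OF assms(2) e] by blast
  have "nv (sum f F - s) < e" if F: "finite F" "h ` F1 \<subseteq> F" "F \<subseteq> h ` A" for F
  proof -
    define F' where "F' = {x\<in>A. h x \<in> F}"
    have hF: "h ` F' = F" using F unfolding F'_def by auto
    have inj: "inj_on h F'" using assms(1) unfolding F'_def by (auto intro: inj_on_subset)
    have "finite F'" using F hF inj finite_imageD by blast
    moreover have "F1 \<subseteq> F'" using F F1 unfolding F'_def by auto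
    moreover have "sum f F = sum (\<lambda>x. f (h x)) F'" using hF sum.reindex[OF inj, of f] by simp
    ultimately show ?thesis using F1(3)[of F'] unfolding F'_def by auto
  qed
  then show "\<exists>F0. finite F0 \<and> F0 \<subseteq> h ` A \<and>
      (\<forall>F. finite F \<and> F0 \<subseteq> F \<and> F \<subseteq> h ` A \<longrightarrow> nv (sum f F - s) < e)"
    using F1 by (intro exI[of _ "h ` F1"]) auto
qed

lemma finite_blocks_meeting:
  assumes "finite F" "\<And>i j. i \<in> I \<Longrightarrow> j \<in> I \<Longrightarrow> i \<noteq> j \<Longrightarrow> P i \<inter> P j = {}"
  shows "finite {i\<in>I. P i \<inter> F \<noteq> {}}"
proof -
  have "{i\<in>I. P i \<inter> F \<noteq> {}} \<subseteq> (\<lambda>x. THE i. i \<in> I \<and> x \<in> P i) ` F"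
  proof
    fix i assume "i \<in> {i\<in>I. P i \<inter> F \<noteq> {}}"
    then obtain x where x: "i \<in> I" "x \<in> P i" "x \<in> F" by auto
    then have "(THE i. i \<in> I \<and> x \<in> P i) = i" using assms(2) by (intro the_equality) blast+
    then show "i \<in> (\<lambda>x. THE i. i \<in> I \<and> x \<in> P i) ` F" using x(3) by force
  qed
  then show ?thesis using assms(1) by (rule finite_surj[rotated])
qed

lemma nv_has_sum_approx_blocks:
  assumes "\<And>i. i \<in> J \<Longrightarrow> nv_has_sum nv f (P i) (\<sigma> i)" "finite F0" "0 < e"
  obtains FF where "\<And>i. i \<in> J \<Longrightarrow>
    finite (FF i) \<and> F0 \<inter> P i \<subseteq> FF i \<and> FF i \<subseteq> P i \<and> nv (sum f (FF i) - \<sigma> i) < e"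
proof -
  have "\<forall>i\<in>J. \<exists>Fi. finite Fi \<and> F0 \<inter> P i \<subseteq> Fi \<and> Fi \<subseteq> P i \<and> nv (sum f Fi - \<sigma> i) < e"
  proof
    fix i assume "i \<in> J"
    obtain F1 where F1: "finite F1" "F1 \<subseteq> P i"
      "\<And>F. finite F \<Longrightarrow> F1 \<subseteq> F \<Longrightarrow> F \<subseteq> P i \<Longrightarrow> nv (sum f F - \<sigma> i) < e"
      using nv_has_sumE[OF assms(1)[OF \<open>i \<in> J\<close>] assms(3)] by blast
    show "\<exists>Fi. finite Fi \<and> F0 \<inter> P i \<subseteq> Fi \<and> Fi \<subseteq> P i \<and> nv (sum f Fi - \<sigma> i) < e"
      using F1 assms(2) by (intro exI[of _ "F1 \<union> (F0 \<inter> P i)"]) auto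
  qed
  then have "\<exists>FF. \<forall>i\<in>J.
      finite (FF i) \<and> F0 \<inter> P i \<subseteq> FF i \<and> FF i \<subseteq> P i \<and> nv (sum f (FF i) - \<sigma> i) < e"
    by (rule bchoice)
  then obtain FF where "\<forall>i\<in>J.
      finite (FF i) \<and> F0 \<inter> P i \<subseteq> FF i \<and> FF i \<subseteq> P i \<and> nv (sum f (FF i) - \<sigma> i) < e"
    by (elim exE)
  then show ?thesis by (intro that) blast
qed

lemma nv_has_sum_partition:
  assumes sum: "nv_has_sum nv f S s" and blocks: "\<And>i. i \<in> I \<Longrightarrow> nv_has_sum nv f (P i) (\<sigma> i)"
    and sub: "\<And>i. i \<in> I \<Longrightarrow> P i \<subseteq> S"
    and disj: "\<And>i j. i \<in> I \<Longrightarrow> j \<in> I \<Longrightarrow> i \<noteq> j \<Longrightarrow> P i \<inter> P j = {}"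
    and cover: "S \<subseteq> \<Union>(P ` I)"
  shows "nv_has_sum nv \<sigma> I s"
  unfolding nv_has_sum_def
proof (intro allI impI)
  fix e :: real assume e: "0 < e"
  obtain F0 where F0: "finite F0" "F0 \<subseteq> S"
    "\<And>F. finite F \<Longrightarrow> F0 \<subseteq> F \<Longrightarrow> F \<subseteq> S \<Longrightarrow> nv (sum f F - s) < e"
    using nv_has_sumE[OF sum e] by blast
  define J0 where "J0 = {i\<in>I. P i \<inter> F0 \<noteq> {}}"
  have "nv (sum \<sigma> J - s) < e" if J: "finite J" "J0 \<subseteq> J" "J \<subseteq> I" for J
  proof -
    obtain FF where FF: "\<And>i. i \<in> J \<Longrightarrow>
        finite (FF i) \<and> F0 \<inter> P i \<subseteq> FF i \<and> FF i \<subseteq> P i \<and> nv (sum f (FF i) - \<sigma> i) < e"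
      using nv_has_sum_approx_blocks[of J f P \<sigma> F0 e] blocks J(3) F0(1) e by blast
    define F where "F = \<Union>(FF ` J)"
    have "F0 \<subseteq> F"
    proof
      fix x assume x: "x \<in> F0"
      then obtain i where i: "i \<in> I" "x \<in> P i" using F0(2) cover by blast
      then have "i \<in> J" using x J(2) unfolding J0_def by blast
      then show "x \<in> F" using FF i(2) x unfolding F_def by blast
    qed
    moreover have "finite F" unfolding F_def using J(1) FF by simp
    moreover have "F \<subseteq> S" unfolding F_def using J(3) FF sub by blast
    ultimately have close: "nv (sum f F - s) < e" using F0(3) by blast
    have "sum f F = (\<Sum>i\<in>J. sum f (FF i))"
      unfolding F_def using J FF disj by (intro sum.UNION_disjoint) blast+
    then have eq: "sum \<sigma> J - s = (\<Sum>i\<in>J. \<sigma> i - sum f (FF i)) + (sum f F - s)"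
      by (simp add: sum_subtractf)
    have "nv (\<Sum>i\<in>J. \<sigma> i - sum f (FF i)) < e"
      using FF nv_minus_commute by (intro nv_sum_less[OF e]) auto
    then show ?thesis unfolding eq using close by (rule nv_add_less)
  qed
  moreover have "finite J0" unfolding J0_def using F0(1) disj by (rule finite_blocks_meeting)
  ultimately show "\<exists>F0. finite F0 \<and> F0 \<subseteq> I \<and>
      (\<forall>F. finite F \<and> F0 \<subseteq> F \<and> F \<subseteq> I \<longrightarrow> nv (sum \<sigma> F - s) < e)"
    by (intro exI[of _ J0]) (auto simp: J0_def)
qed

end

section \<open>Convolution\<close>

lemma mminus_eq: "mminus A B i j = (\<lambda>g. A i j g - B i j g)"
  by (simp add: mminus_def fun_eq_iff)

lemma mpow_Suc_entry:
  "mpow G nv r D (Suc n) i j = (\<lambda>g. \<Sum>k<r. conv G nv (mpow G nv r D n i k) (D k j) g)"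
  by (simp add: mmul_def fun_eq_iff)


context complete_ultrametric_abs
begin

lemma c0_on_products_finite:
  assumes "c0_on nv x S" "c0_on nv y T" "0 < e"
  shows "finite {(a, b). a \<in> S \<and> b \<in> T \<and> e \<le> nv (x a) * nv (y b)}"
proof -
  obtain Bx where Bx: "0 < Bx" "\<And>a. a \<in> S \<Longrightarrow> nv (x a) \<le> Bx"
    using c0_on_bounded[OF assms(1)] by blast
  obtain By where By: "0 < By" "\<And>b. b \<in> T \<Longrightarrow> nv (y b) \<le> By"
    using c0_on_bounded[OF assms(2)] by blast
  have "{(a, b). a \<in> S \<and> b \<in> T \<and> e \<le> nv (x a) * nv (y b)}
      \<subseteq> {a\<in>S. e / By \<le> nv (x a)} \<times> {b\<in>T. e / Bx \<le> nv (y b)}"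
  proof safe
    fix a b assume ab: "a \<in> S" "b \<in> T" "e \<le> nv (x a) * nv (y b)"
    have "nv (x a) * nv (y b) \<le> nv (x a) * By" using By ab nv_nonneg by (intro mult_left_mono) auto
    then show "e / By \<le> nv (x a)" using ab By by (simp add: divide_le_eq)
    have "nv (x a) * nv (y b) \<le> Bx * nv (y b)" using Bx ab nv_nonneg by (intro mult_right_mono) auto
    then show "e / Bx \<le> nv (y b)" using ab Bx by (simp add: divide_le_eq mult.commute)
  qed
  moreover have "finite ({a\<in>S. e / By \<le> nv (x a)} \<times> {b\<in>T. e / Bx \<le> nv (y b)})"
    using assms Bx By unfolding c0_on_def by simp
  ultimately show ?thesis using finite_subset by blast
qed

lemma c0_on_mone:
  fixes G :: "('g, 'c) monoid_scheme" (structure)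
  shows "c0_on nv (mone G i j) (carrier G)"
proof -
  have "{g \<in> carrier G. e \<le> nv (mone G i j g)} \<subseteq> {\<one>}" if "0 < e" for e :: real
    using that by (auto simp: mone_def split: if_split_asm)
  then show ?thesis unfolding c0_on_def using finite_subset by blast
qed

context
  fixes G :: "('g, 'c) monoid_scheme" (structure)
  assumes G: "group G"
begin

interpretation group G by (fact G)

lemma c0_on_conv_terms:
  assumes "c0_on nv x (carrier G)" "c0_on nv y (carrier G)" "C \<subseteq> carrier G"
  shows "c0_on nv (\<lambda>(a, g). x a * y (inv a \<otimes> g)) (carrier G \<times> C)"
  unfolding c0_on_def
proof (intro allI impI)
  fix e :: real assume e: "0 < e"
  let ?P = "{(a, b). a \<in> carrier G \<and> b \<in> carrier G \<and> e \<le> nv (x a) * nv (y b)}"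
  have "{z \<in> carrier G \<times> C. e \<le> nv ((\<lambda>(a, g). x a * y (inv a \<otimes> g)) z)}
      \<subseteq> (\<lambda>(a, b). (a, a \<otimes> b)) ` ?P"
  proof
    fix z assume "z \<in> {z \<in> carrier G \<times> C. e \<le> nv ((\<lambda>(a, g). x a * y (inv a \<otimes> g)) z)}"
    then obtain a g where "z = (a, g)" "a \<in> carrier G" "g \<in> C" "e \<le> nv (x a * y (inv a \<otimes> g))"
      by auto
    then have "(a, inv a \<otimes> g) \<in> ?P" "z = (\<lambda>(a, b). (a, a \<otimes> b)) (a, inv a \<otimes> g)"
      using assms(3) by (auto simp: nv_mult m_assoc[symmetric])
    then show "z \<in> (\<lambda>(a, b). (a, a \<otimes> b)) ` ?P" by blast
  qed
  moreover have "finite ?P" using c0_on_products_finite[OF assms(1,2) e] by simp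
  ultimately show "finite {z \<in> carrier G \<times> C. e \<le> nv ((\<lambda>(a, g). x a * y (inv a \<otimes> g)) z)}"
    using finite_subset by blast
qed

lemma c0_on_conv_terms_at:
  assumes "c0_on nv x (carrier G)" "c0_on nv y (carrier G)" "g \<in> carrier G"
  shows "c0_on nv (\<lambda>a. x a * y (inv a \<otimes> g)) (carrier G)"
  unfolding c0_on_def
proof (intro allI impI)
  fix e :: real assume e: "0 < e"
  let ?P = "{(a, b). a \<in> carrier G \<and> b \<in> carrier G \<and> e \<le> nv (x a) * nv (y b)}"
  have "{a \<in> carrier G. e \<le> nv (x a * y (inv a \<otimes> g))} \<subseteq> fst ` ?P"
  proof safe
    fix a assume "a \<in> carrier G" "e \<le> nv (x a * y (inv a \<otimes> g))"
    then have "(a, inv a \<otimes> g) \<in> ?P" using assms(3) by (auto simp: nv_mult)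
    then show "a \<in> fst ` ?P" by force
  qed
  moreover have "finite ?P" using c0_on_products_finite[OF assms(1,2) e] by simp
  ultimately show "finite {a \<in> carrier G. e \<le> nv (x a * y (inv a \<otimes> g))}"
    using finite_subset by blast
qed

lemma nv_has_sum_conv:
  assumes "c0_on nv x (carrier G)" "c0_on nv y (carrier G)" "g \<in> carrier G"
  shows "nv_has_sum nv (\<lambda>a. x a * y (inv a \<otimes> g)) (carrier G) (conv G nv x y g)"
  using nv_has_sum_nv_sum[OF c0_on_conv_terms_at[OF assms]] assms(3) by (simp add: conv_def)

lemma nv_conv_le:
  assumes "c0_on nv x (carrier G)" "c0_on nv y (carrier G)"
    "0 \<le> Bx" "\<And>a. a \<in> carrier G \<Longrightarrow> nv (x a) \<le> Bx"
    "0 \<le> By" "\<And>a. a \<in> carrier G \<Longrightarrow> nv (y a) \<le> By"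
  shows "nv (conv G nv x y g) \<le> Bx * By"
proof (cases "g \<in> carrier G")
  case True
  show ?thesis
  proof (rule nv_has_sum_bound[OF nv_has_sum_conv[OF assms(1,2) True]])
    fix a assume "a \<in> carrier G"
    then show "nv (x a * y (inv a \<otimes> g)) \<le> Bx * By"
      using assms True nv_nonneg by (auto simp: nv_mult intro: mult_mono)
  qed (use assms in simp)
qed (use assms in \<open>simp add: conv_def\<close>)

text \<open>A coefficient of size at least e of the product needs a pair of factors
whose coefficients have product of size at least e/2.\<close>

lemma c0_on_conv:
  assumes "c0_on nv x (carrier G)" "c0_on nv y (carrier G)"
  shows "c0_on nv (conv G nv x y) (carrier G)"
  unfolding c0_on_def
proof (intro allI impI)
  fix e :: real assume e: "0 < e"
  let ?P = "{(a, b). a \<in> carrier G \<and> b \<in> carrier G \<and> e / 2 \<le> nv (x a) * nv (y b)}"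
  have "{g \<in> carrier G. e \<le> nv (conv G nv x y g)} \<subseteq> (\<lambda>(a, b). a \<otimes> b) ` ?P"
  proof safe
    fix g assume g: "g \<in> carrier G" "e \<le> nv (conv G nv x y g)"
    have "\<exists>a\<in>carrier G. e / 2 \<le> nv (x a * y (inv a \<otimes> g))"
    proof (rule ccontr)
      assume "\<not> (\<exists>a\<in>carrier G. e / 2 \<le> nv (x a * y (inv a \<otimes> g)))"
      then have "nv (conv G nv x y g) \<le> e / 2"
        by (intro nv_has_sum_bound[OF nv_has_sum_conv[OF assms g(1)]]) (use e in auto)
      then show False using g e by simp
    qed
    then obtain a where a: "a \<in> carrier G" "e / 2 \<le> nv (x a * y (inv a \<otimes> g))" by blast
    then have "(a, inv a \<otimes> g) \<in> ?P" "g = (\<lambda>(a, b). a \<otimes> b) (a, inv a \<otimes> g)"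
      using g by (auto simp: nv_mult m_assoc[symmetric])
    then show "g \<in> (\<lambda>(a, b). a \<otimes> b) ` ?P" by blast
  qed
  moreover have "finite ?P" using c0_on_products_finite[OF assms, of "e / 2"] e by simp
  ultimately show "finite {g \<in> carrier G. e \<le> nv (conv G nv x y g)}"
    using finite_subset by blast
qed

lemma conv_cong:
  assumes "\<And>a. a \<in> carrier G \<Longrightarrow> x a = x' a" "\<And>a. a \<in> carrier G \<Longrightarrow> y a = y' a"
  shows "conv G nv x y g = conv G nv x' y' g"
  unfolding conv_def by (auto intro!: nv_sum_cong simp: assms)

lemma c0_on_mpow:
  assumes "\<And>i j. i < r \<Longrightarrow> j < r \<Longrightarrow> c0_on nv (D i j) (carrier G)" "i < r" "j < r"
  shows "c0_on nv (mpow G nv r D n i j) (carrier G)"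
  using assms(2,3)
proof (induction n arbitrary: i j)
  case 0
  then show ?case using c0_on_mone by simp
next
  case (Suc n)
  then show ?case
    unfolding mpow_Suc_entry by (intro c0_on_sum c0_on_conv) (auto intro: assms(1))
qed

lemma nv_mpow_le:
  assumes "\<And>i j. i < r \<Longrightarrow> j < r \<Longrightarrow> c0_on nv (D i j) (carrier G)" "0 \<le> q"
    "\<And>i j g. i < r \<Longrightarrow> j < r \<Longrightarrow> g \<in> carrier G \<Longrightarrow> nv (D i j g) \<le> q"
    "i < r" "j < r" "g \<in> carrier G"
  shows "nv (mpow G nv r D n i j g) \<le> q ^ n"
  using assms(4-6)
proof (induction n arbitrary: i j g)
  case 0
  then show ?case by (simp add: mone_def)
next
  case (Suc n)
  have "nv (conv G nv (mpow G nv r D n i k) (D k j) g) \<le> q ^ n * q" if "k < r" for k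
    using Suc that assms by (intro nv_conv_le c0_on_mpow) auto
  then have "nv (\<Sum>k<r. conv G nv (mpow G nv r D n i k) (D k j) g) \<le> q ^ n * q"
    using assms(2) by (intro nv_sum_le) auto
  then show ?case unfolding mpow_Suc_entry by (simp add: mult.commute)
qed

end

end

section \<open>Reduction modulo a normal subgroup\<close>

lemma (in normal) Mod_carrier_subset: "A \<in> carrier (G Mod H) \<Longrightarrow> A \<subseteq> carrier G"
  using rcosets_carrier[OF is_group] by (simp add: FactGroup_def)

lemma (in normal) Mod_carrier_rcos: "A \<in> carrier (G Mod H) \<Longrightarrow> \<exists>a\<in>carrier G. A = H #> a"
  by (auto simp: FactGroup_def RCOSETS_def)

lemma (in normal) Mod_carrier_eq_rcos:
  assumes "A \<in> carrier (G Mod H)" "a \<in> A"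
  shows "A = H #> a"
proof -
  obtain a0 where "a0 \<in> carrier G" "A = H #> a0" using Mod_carrier_rcos[OF assms(1)] by blast
  then show ?thesis using repr_independence[of a H a0] assms(2) subgroup_axioms by simp
qed

lemma (in normal) Mod_translate_inv_mult:
  assumes "A \<in> carrier (G Mod H)" "C \<in> carrier (G Mod H)" "a \<in> A"
  shows "(\<lambda>b. a \<otimes> b) ` (inv\<^bsub>G Mod H\<^esub> A \<otimes>\<^bsub>G Mod H\<^esub> C) = C"
proof -
  have aG: "a \<in> carrier G" using Mod_carrier_subset[OF assms(1)] assms(3) by auto
  obtain c where c: "c \<in> carrier G" "C = H #> c" using Mod_carrier_rcos[OF assms(2)] by blast
  have "inv\<^bsub>G Mod H\<^esub> A \<otimes>\<^bsub>G Mod H\<^esub> C = H #> (inv a \<otimes> c)"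
    using inv_FactGroup[OF assms(1)] Mod_carrier_eq_rcos[OF assms(1,3)] rcos_inv[OF aG] c aG
    by (simp add: rcos_sum)
  moreover have "(\<lambda>b. a \<otimes> b) ` (H #> (inv a \<otimes> c)) = H #> c"
  proof
    show "(\<lambda>b. a \<otimes> b) ` (H #> (inv a \<otimes> c)) \<subseteq> H #> c"
    proof
      fix z assume "z \<in> (\<lambda>b. a \<otimes> b) ` (H #> (inv a \<otimes> c))"
      then obtain h where h: "h \<in> H" "z = a \<otimes> (h \<otimes> (inv a \<otimes> c))" unfolding r_coset_def by auto
      then have "z = (a \<otimes> h \<otimes> inv a) \<otimes> c" using aG c by (simp add: m_assoc)
      then show "z \<in> H #> c" using inv_op_closed2[OF aG h(1)] unfolding r_coset_def by auto
    qed
    show "H #> c \<subseteq> (\<lambda>b. a \<otimes> b) ` (H #> (inv a \<otimes> c))"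
    proof
      fix z assume "z \<in> H #> c"
      then obtain h where h: "h \<in> H" "z = h \<otimes> c" unfolding r_coset_def by auto
      then have "z = a \<otimes> ((inv a \<otimes> h \<otimes> a) \<otimes> (inv a \<otimes> c))"
        using aG c by (simp add: m_assoc[symmetric]) (simp add: m_assoc)
      moreover have "(inv a \<otimes> h \<otimes> a) \<otimes> (inv a \<otimes> c) \<in> H #> (inv a \<otimes> c)"
        using inv_op_closed1[OF aG h(1)] unfolding r_coset_def by auto
      ultimately show "z \<in> (\<lambda>b. a \<otimes> b) ` (H #> (inv a \<otimes> c))" by blast
    qed
  qed
  ultimately show ?thesis using c by simp
qed


context complete_ultrametric_abs
begin

context
  fixes G :: "('g, 'c) monoid_scheme" (structure) and N :: "'g set"
  assumes N: "N \<lhd> G"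
begin

interpretation normal N G by (fact N)

lemma nv_has_sum_mone_Mod:
  assumes "C \<in> carrier (G Mod N)"
  shows "nv_has_sum nv (mone G i j) C (mone (G Mod N) i j C)"
proof -
  have one_in_C: "\<one> \<in> C \<longleftrightarrow> C = N"
    using Mod_carrier_eq_rcos[OF assms, of \<one>] subset by auto
  have "nv_has_sum nv (mone G i j) C (sum (mone G i j) (C \<inter> {\<one>}))"
    by (rule nv_has_sum_finite_support) (auto simp: mone_def)
  then show ?thesis using one_in_C by (cases "\<one> \<in> C") (auto simp: mone_def)
qed

text \<open>The coefficient of C in the product of the reductions is a sum over
G \<times> C, split into the blocks A \<times> C, A running through the cosets.\<close>

lemma nv_has_sum_conv_block:
  assumes x: "c0_on nv x (carrier G)" and y: "c0_on nv y (carrier G)"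
    and A: "A \<in> carrier (G Mod N)" and C: "C \<in> carrier (G Mod N)"
  shows "nv_has_sum nv (\<lambda>(a, g). x a * y (inv a \<otimes> g)) (A \<times> C)
    (nv_sum nv x A * nv_sum nv y (inv\<^bsub>G Mod N\<^esub> A \<otimes>\<^bsub>G Mod N\<^esub> C))"
proof -
  let ?F = "\<lambda>(a, g). x a * y (inv a \<otimes> g)"
  define C' where "C' = inv\<^bsub>G Mod N\<^esub> A \<otimes>\<^bsub>G Mod N\<^esub> C"
  interpret Mod: group "G Mod N" by (rule factorgroup_is_group)
  have "C' \<in> carrier (G Mod N)" unfolding C'_def by (intro Mod.m_closed Mod.inv_closed A C)
  then have A_sub: "A \<subseteq> carrier G" and C'_sub: "C' \<subseteq> carrier G" and C_sub: "C \<subseteq> carrier G"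
    using Mod_carrier_subset A C by auto
  have "A \<times> C \<subseteq> carrier G \<times> C" using A_sub by auto
  then obtain s where s: "nv_has_sum nv ?F (A \<times> C) s"
    using nv_has_sum_exists[OF c0_on_subset[OF c0_on_conv_terms[OF is_group x y C_sub]]] by blast
  have row: "nv_has_sum nv ?F ((\<lambda>g. (a, g)) ` C) (x a * nv_sum nv y C')" if a: "a \<in> A" for a
  proof -
    have aG: "a \<in> carrier G" using a A_sub by auto
    have "nv_has_sum nv (\<lambda>b. y (inv a \<otimes> (a \<otimes> b))) C' (nv_sum nv y C')"
      by (rule nv_has_sum_cong[OF _ nv_has_sum_nv_sum[OF c0_on_subset[OF y C'_sub]]])
        (use C'_sub aG in \<open>auto simp: m_assoc[symmetric]\<close>)
    then have "nv_has_sum nv (\<lambda>g. y (inv a \<otimes> g)) ((\<lambda>b. a \<otimes> b) ` C') (nv_sum nv y C')"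
      using C'_sub aG by (intro nv_has_sum_reindex) (auto simp: inj_on_def subset_iff l_cancel)
    moreover have "(\<lambda>b. a \<otimes> b) ` C' = C"
      unfolding C'_def by (rule Mod_translate_inv_mult[OF A C a])
    ultimately have "nv_has_sum nv (\<lambda>g. y (inv a \<otimes> g)) C (nv_sum nv y C')" by simp
    then have "nv_has_sum nv (\<lambda>g. x a * y (inv a \<otimes> g)) C (x a * nv_sum nv y C')"
      by (rule nv_has_sum_cmult)
    then show ?thesis by (intro nv_has_sum_reindex) (auto simp: inj_on_def)
  qed
  have "nv_has_sum nv (\<lambda>a. x a * nv_sum nv y C') A s"
    by (rule nv_has_sum_partition[where P = "\<lambda>a. (\<lambda>g. (a, g)) ` C", OF s row]) auto
  moreover have "nv_has_sum nv (\<lambda>a. x a * nv_sum nv y C') A (nv_sum nv x A * nv_sum nv y C')"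
    using nv_has_sum_cmult[OF nv_has_sum_nv_sum[OF c0_on_subset[OF x A_sub]], of "nv_sum nv y C'"]
    by (simp add: mult.commute)
  ultimately have "s = nv_sum nv x A * nv_sum nv y C'" by (rule nv_has_sum_unique)
  then show ?thesis using s unfolding C'_def by simp
qed

lemma conv_Mod_nv_sum:
  assumes x: "c0_on nv x (carrier G)" and y: "c0_on nv y (carrier G)"
    and C: "C \<in> carrier (G Mod N)"
  shows "conv (G Mod N) nv (nv_sum nv x) (nv_sum nv y) C = nv_sum nv (conv G nv x y) C"
proof -
  let ?F = "\<lambda>(a, g). x a * y (inv a \<otimes> g)"
  have C_sub: "C \<subseteq> carrier G" using Mod_carrier_subset[OF C] .
  obtain s where s: "nv_has_sum nv ?F (carrier G \<times> C) s"
    using nv_has_sum_exists[OF c0_on_conv_terms[OF is_group x y C_sub]] by blast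
  have "nv_has_sum nv (conv G nv x y) C s"
  proof (rule nv_has_sum_partition[OF s, where P = "\<lambda>g. (\<lambda>a. (a, g)) ` carrier G"])
    fix g assume "g \<in> C"
    then have "nv_has_sum nv (\<lambda>a. ?F (a, g)) (carrier G) (conv G nv x y g)"
      using nv_has_sum_conv[OF is_group x y] C_sub by auto
    then show "nv_has_sum nv ?F ((\<lambda>a. (a, g)) ` carrier G) (conv G nv x y g)"
      by (intro nv_has_sum_reindex) (auto simp: inj_on_def)
  qed auto
  moreover have "nv_has_sum nv (\<lambda>A. nv_sum nv x A * nv_sum nv y (inv\<^bsub>G Mod N\<^esub> A \<otimes>\<^bsub>G Mod N\<^esub> C))
      (carrier (G Mod N)) s"
  proof (rule nv_has_sum_partition[where P = "\<lambda>A. A \<times> C", OF s nv_has_sum_conv_block[OF x y _ C]])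
    fix A B assume "A \<in> carrier (G Mod N)" "B \<in> carrier (G Mod N)" "A \<noteq> B"
    then have "A \<inter> B = {}"
      using rcos_disjoint[OF subgroup_axioms] by (auto simp: FactGroup_def pairwise_def disjnt_def)
    then show "A \<times> C \<inter> B \<times> C = {}" by auto
  next
    have "a \<in> N #> a" "N #> a \<in> carrier (G Mod N)" if "a \<in> carrier G" for a
      using that rcos_self[OF _ subgroup_axioms] by (auto simp: FactGroup_def RCOSETS_def)
    then show "carrier G \<times> C \<subseteq> (\<Union>A\<in>carrier (G Mod N). A \<times> C)" by blast
  qed (use Mod_carrier_subset in auto)
  ultimately show ?thesis
    using C by (simp add: conv_def nv_sum_eqI)
qed

lemma mpow_Mod_nv_sum:
  assumes "\<And>i j. i < r \<Longrightarrow> j < r \<Longrightarrow> c0_on nv (D i j) (carrier G)"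
    and "\<And>C i j. C \<in> carrier (G Mod N) \<Longrightarrow> i < r \<Longrightarrow> j < r \<Longrightarrow> DN i j C = nv_sum nv (D i j) C"
    and "C \<in> carrier (G Mod N)" "i < r" "j < r"
  shows "mpow (G Mod N) nv r DN n i j C = nv_sum nv (mpow G nv r D n i j) C"
  using assms(3-5)
proof (induction n arbitrary: C i j)
  case 0
  then show ?case using nv_sum_eqI[OF nv_has_sum_mone_Mod] by simp
next
  case (Suc n)
  interpret Mod: group "G Mod N" by (rule factorgroup_is_group)
  have c0_mpow: "c0_on nv (mpow G nv r D n i k) (carrier G)" if "k < r" for k
    using assms(1) Suc.prems(2) that by (rule c0_on_mpow[OF is_group])
  have "mpow (G Mod N) nv r DN (Suc n) i j C =
      (\<Sum>k<r. conv (G Mod N) nv (nv_sum nv (mpow G nv r D n i k)) (nv_sum nv (D k j)) C)"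
    unfolding mpow_Suc_entry using Suc assms(2)
    by (intro sum.cong conv_cong Mod.is_group) auto
  also have "\<dots> = (\<Sum>k<r. nv_sum nv (conv G nv (mpow G nv r D n i k) (D k j)) C)"
    using Suc.prems c0_mpow assms(1) by (intro sum.cong conv_Mod_nv_sum) auto
  also have "\<dots> = nv_sum nv (mpow G nv r D (Suc n) i j) C"
    unfolding mpow_Suc_entry
    using Suc.prems c0_mpow assms(1) Mod_carrier_subset[OF Suc.prems(1)]
    by (intro nv_sum_eqI[symmetric] nv_has_sum_sum nv_has_sum_nv_sum c0_on_subset[OF c0_on_conv[OF is_group]])
      auto
  finally show ?case .
qed

lemma mminus_mone_mreduce:
  assumes "c0_on nv (f i j) (carrier G)" "C \<in> carrier (G Mod N)"
  shows "mminus (mone (G Mod N)) (mreduce nv f) i j C = nv_sum nv (mminus (mone G) f i j) C"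
proof -
  have "nv_has_sum nv (\<lambda>g. mone G i j g - f i j g) C (mone (G Mod N) i j C - nv_sum nv (f i j) C)"
    using nv_has_sum_mone_Mod[OF assms(2)] nv_has_sum_nv_sum[OF c0_on_subset[OF assms(1)]]
      Mod_carrier_subset[OF assms(2)] by (blast intro: nv_has_sum_diff)
  then show ?thesis by (simp add: mminus_eq mreduce_def nv_sum_eqI)
qed

end

lemma nv_sum_tends_to_e:
  fixes G :: "('g, 'c) monoid_scheme" (structure)
  assumes \<Gamma>s: "tends_to_e G \<Gamma>s" and x: "c0_on nv x (carrier G)"
  shows "nv_tendsto nv (\<lambda>n. nv_sum nv x (\<Gamma>s n)) (x \<one>)"
proof (rule nv_tendstoI)
  fix \<delta> :: real assume \<delta>: "0 < \<delta>"
  have subgroup: "subgroup (\<Gamma>s n) G" for n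
    using \<Gamma>s by (simp add: tends_to_e_def normal_imp_subgroup)
  define Big where "Big = {g \<in> carrier G. \<delta> \<le> nv (x g)} - {\<one>}"
  have "finite Big" using x \<delta> unfolding c0_on_def Big_def by auto
  moreover have "finite {n. g \<in> \<Gamma>s n}" if "g \<in> Big" for g
    using \<Gamma>s that unfolding tends_to_e_def Big_def by blast
  ultimately have "finite (\<Union>g\<in>Big. {n. g \<in> \<Gamma>s n})" by simp
  then obtain n0 where "(\<Union>g\<in>Big. {n. g \<in> \<Gamma>s n}) \<subseteq> {..<n0}"
    using finite_nat_bounded by blast
  then have n0: "\<And>n g. g \<in> Big \<Longrightarrow> g \<in> \<Gamma>s n \<Longrightarrow> n < n0" by blast
  show "\<forall>\<^sub>F n in sequentially. nv (nv_sum nv x (\<Gamma>s n) - x \<one>) \<le> \<delta>"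
    unfolding eventually_sequentially
  proof (intro exI allI impI)
    fix n assume "n0 \<le> n"
    have sub: "\<Gamma>s n \<subseteq> carrier G" and one: "\<one> \<in> \<Gamma>s n"
      using subgroup.subset subgroup.one_closed subgroup by blast+
    have tail: "nv_has_sum nv x (\<Gamma>s n - {\<one>}) (nv_sum nv x (\<Gamma>s n) - x \<one>)"
      using nv_has_sum_Diff_singleton[OF nv_has_sum_nv_sum[OF c0_on_subset[OF x sub]] one] .
    have small: "nv (x g) \<le> \<delta>" if g: "g \<in> \<Gamma>s n - {\<one>}" for g
    proof (rule ccontr)
      assume "\<not> nv (x g) \<le> \<delta>"
      then have "g \<in> Big" using g sub unfolding Big_def by auto
      then show False using n0[where n = n and g = g] \<open>n0 \<le> n\<close> g by auto
    qed
    show "nv (nv_sum nv x (\<Gamma>s n) - x \<one>) \<le> \<delta>"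
      by (rule nv_has_sum_bound[OF tail]) (use \<delta> small in auto)
  qed
qed

end

section \<open>The p-adic logarithm\<close>

definition log_series :: "('a::field_char_0 \<Rightarrow> real) \<Rightarrow> (nat \<Rightarrow> 'a) \<Rightarrow> 'a" where
  "log_series nv a = nv_lim nv (\<lambda>m. - (\<Sum>k\<in>{1..m}. a k / of_nat k))"

lemma log_det_eq_log_series:
  "log_det G nv r u = (\<Sum>i<r. log_series nv (\<lambda>k. mpow G nv r (mminus (mone G) u) k i i \<one>\<^bsub>G\<^esub>))"
  by (simp add: log_det_def trG_def mlog_def log_series_def)

lemma (in complete_ultrametric_abs) log_det_Mod:
  fixes G :: "('g, 'c) monoid_scheme" (structure)
  assumes N: "N \<lhd> G" and f: "\<And>i j. i < r \<Longrightarrow> j < r \<Longrightarrow> c0_on nv (f i j) (carrier G)"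
  shows "log_det (G Mod N) nv r (mreduce nv f) =
    (\<Sum>i<r. log_series nv (\<lambda>k. nv_sum nv (mpow G nv r (mminus (mone G) f) k i i) N))"
proof -
  interpret normal N G by (fact N)
  have D: "c0_on nv (mminus (mone G) f i j) (carrier G)" if "i < r" "j < r" for i j
    using c0_on_diff[OF c0_on_mone f[OF that]] by (simp add: mminus_eq)
  have D_Mod: "mminus (mone (G Mod N)) (mreduce nv f) i j C = nv_sum nv (mminus (mone G) f i j) C"
    if "C \<in> carrier (G Mod N)" "i < r" "j < r" for C i j
    using mminus_mone_mreduce[where f = f and i = i and j = j, OF N f[OF that(2,3)] that(1)] .
  have "N \<in> carrier (G Mod N)" using subgroup_in_rcosets[OF is_group] by (simp add: FactGroup_def)
  then have "mpow (G Mod N) nv r (mminus (mone (G Mod N)) (mreduce nv f)) k i i N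
      = nv_sum nv (mpow G nv r (mminus (mone G) f) k i i) N" if "i < r" for k i
    using mpow_Mod_nv_sum[where D = "mminus (mone G) f" and DN = "mminus (mone (G Mod N)) (mreduce nv f)",
        OF N D D_Mod _ that that] by blast
  then show ?thesis by (simp add: log_det_eq_log_series)
qed

locale padic_abs =
  fixes p :: nat and nv :: "'a::field_char_0 \<Rightarrow> real"
  assumes padic_field: "padic_field p nv"

sublocale padic_abs \<subseteq> complete_ultrametric_abs nv
  using padic_field unfolding complete_ultrametric_abs_def padic_field_def by blast

context padic_abs
begin

lemma p_prime: "Factorial_Ring.prime p"
  using padic_field by (simp add: padic_field_def)

lemma p_ge_2: "2 \<le> p"
  using p_prime prime_ge_2_nat by blast

lemma nv_of_nat_p: "nv (of_nat p) = 1 / real p"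
  using padic_field by (simp add: padic_field_def)

lemma nv_of_nat_coprime:
  assumes "\<not> p dvd k"
  shows "nv (of_nat k) = 1"
proof -
  have "coprime k p"
    using prime_imp_coprime[OF p_prime assms] by (simp add: coprime_commute)
  then obtain x y where "k * x = p * y + 1"
    using bezout_nat[of k p] assms by (auto simp: coprime_iff_gcd_eq_1)
  then have "(1 :: 'a) = of_nat k * of_nat x - of_nat p * of_nat y"
    by (metis add_diff_cancel_left' of_nat_1 of_nat_add of_nat_mult add.commute)
  then have "1 \<le> max (nv (of_nat k) * nv (of_nat x :: 'a)) (1 / real p * nv (of_nat y :: 'a))"
    using nv_diff_le_max[of "of_nat k * of_nat x" "of_nat p * of_nat y :: 'a"]
    by (simp add: nv_mult nv_of_nat_p)
  moreover have "nv (of_nat k) * nv (of_nat x :: 'a) \<le> nv (of_nat k)"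
    using nv_of_nat_le_1[of x] nv_nonneg[of "of_nat k"] by (simp add: mult_left_le)
  moreover have "1 / real p * nv (of_nat y :: 'a) \<le> 1 / real p"
    using nv_of_nat_le_1[of y] p_ge_2 by (simp add: divide_le_eq)
  moreover have "1 / real p < 1" using p_ge_2 by simp
  ultimately have "1 \<le> nv (of_nat k)" by (auto simp: max_def split: if_split_asm)
  then show ?thesis using nv_of_nat_le_1[of k] by linarith
qed

lemma nv_of_nat_ge: "1 \<le> k \<Longrightarrow> 1 / real k \<le> nv (of_nat k)"
proof (induction k rule: less_induct)
  case (less k)
  show ?case
  proof (cases "p dvd k")
    case True
    then obtain m where m: "k = p * m" by blast
    then have "1 \<le> m" "m < k" using less.prems p_ge_2 by (auto simp: Suc_le_eq)
    then have "1 / real m \<le> nv (of_nat m)" by (rule less.IH[rotated])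
    then have "1 / real m / real p \<le> nv (of_nat m) / real p" by (rule divide_right_mono) simp
    moreover have "nv (of_nat k) = nv (of_nat m) / real p" using m by (simp add: nv_mult nv_of_nat_p)
    moreover have "1 / real k = 1 / real m / real p" using m by (simp add: mult.commute)
    ultimately show ?thesis by (simp only:)
  qed (use nv_of_nat_coprime less.prems in simp)
qed

lemma nv_divide_of_nat_le: "nv (u / of_nat k) \<le> real k * nv u"
proof (cases "k = 0")
  case False
  then have k: "1 / real k \<le> nv (of_nat k)" by (simp add: nv_of_nat_ge)
  have "0 < 1 / real k" using False by simp
  then have "0 < nv (of_nat k)" using k by linarith
  then have "nv u / nv (of_nat k) \<le> nv u / (1 / real k)"
    using k False nv_nonneg[of u] by (intro divide_left_mono mult_pos_pos) auto
  then show ?thesis by (simp add: nv_divide mult.commute)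
qed simp

lemma nv_log_term_le:
  assumes "nv a \<le> (1 / real p) ^ k"
  shows "nv (- (a / of_nat k)) \<le> real k * (1 / real p) ^ k"
  using nv_divide_of_nat_le[of a k] mult_left_mono[OF assms, of "real k"] by simp

lemma log_weights_null: "(\<lambda>k. real k * (1 / real p) ^ k) \<longlonglongrightarrow> 0"
  using p_ge_2 by (intro powser_times_n_limit_0) simp

lemma nv_tendsto_log_series:
  assumes "\<And>k. nv (a k) \<le> (1 / real p) ^ k"
  shows "nv_tendsto nv (\<lambda>m. \<Sum>k\<in>{1..m}. - (a k / of_nat k)) (log_series nv a)"
proof -
  have terms_null: "\<exists>M. \<forall>k\<ge>M. nv (- (a k / of_nat k)) < e" if "0 < e" for e
    using order_tendstoD(2)[OF log_weights_null that] nv_log_term_le[OF assms]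
    unfolding eventually_sequentially by (meson le_less_trans)
  then obtain L where "nv_tendsto nv (\<lambda>m. \<Sum>k\<in>{1..m}. - (a k / of_nat k)) L"
    using nv_series_convergent[OF terms_null] by blast
  then show ?thesis by (simp add: log_series_def sum_negf nv_lim_eqI)
qed

lemma log_series_tendsto:
  assumes "\<And>n k. nv (a n k) \<le> (1 / real p) ^ k" "\<And>k. nv (b k) \<le> (1 / real p) ^ k"
    and "\<And>k. nv_tendsto nv (\<lambda>n. a n k) (b k)"
  shows "nv_tendsto nv (\<lambda>n. log_series nv (a n)) (log_series nv b)"
proof (rule nv_tendsto_series_limits[OF nv_tendsto_log_series nv_tendsto_log_series
    nv_log_term_le nv_log_term_le log_weights_null])
  fix k
  have "(\<lambda>n. nv (a n k - b k) / nv (of_nat k :: 'a)) \<longlonglongrightarrow> 0"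
    using assms(3) unfolding nv_tendsto_def by (rule tendsto_divide_zero)
  moreover have "- (a n k / of_nat k) - - (b k / of_nat k) = - ((a n k - b k) / of_nat k)" for n
    by (simp add: diff_divide_distrib)
  ultimately show "nv_tendsto nv (\<lambda>n. - (a n k / of_nat k)) (- (b k / of_nat k))"
    unfolding nv_tendsto_def by (simp only: nv_minus nv_divide)
qed (use assms in auto)

lemma log_series_nv_sum_tends_to_e:
  fixes G :: "('g, 'c) monoid_scheme" (structure)
  assumes G: "group G" and \<Gamma>s: "tends_to_e G \<Gamma>s"
    and c0: "\<And>k. c0_on nv (x k) (carrier G)"
    and bound: "\<And>k g. g \<in> carrier G \<Longrightarrow> nv (x k g) \<le> (1 / real p) ^ k"
  shows "nv_tendsto nv (\<lambda>n. log_series nv (\<lambda>k. nv_sum nv (x k) (\<Gamma>s n))) (log_series nv (\<lambda>k. x k \<one>))"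
proof (rule log_series_tendsto)
  fix n k
  have "subgroup (\<Gamma>s n) G" using \<Gamma>s by (simp add: tends_to_e_def normal_imp_subgroup)
  then have "\<Gamma>s n \<subseteq> carrier G" by (rule subgroup.subset)
  then show "nv (nv_sum nv (x k) (\<Gamma>s n)) \<le> (1 / real p) ^ k"
    using bound by (intro nv_sum_bound[OF c0_on_subset[OF c0]]) auto
next
  show "nv (x k \<one>) \<le> (1 / real p) ^ k" for k
    using bound[OF monoid.one_closed[OF group.is_monoid[OF G]]] .
  show "nv_tendsto nv (\<lambda>n. nv_sum nv (x k) (\<Gamma>s n)) (x k \<one>)" for k
    using nv_sum_tends_to_e[OF \<Gamma>s c0] .
qed

lemma one_plus_p_int_entries:
  fixes G :: "('g, 'c) monoid_scheme"
  assumes "one_plus_p_int p G nv r f" "i < r" "j < r"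
  shows "c0_on nv (f i j) (carrier G)" "c0_on nv (mminus (mone G) f i j) (carrier G)"
    and "nv (mminus (mone G) f i j g) \<le> 1 / real p"
proof -
  obtain A where A: "c0 G nv (A i j)" "\<And>g. nv (A i j g) \<le> 1"
    and f: "\<And>g. f i j g = mone G i j g + of_nat p * A i j g"
    using assms unfolding one_plus_p_int_def by blast
  have D: "mminus (mone G) f i j = (\<lambda>g. - of_nat p * A i j g)"
    by (simp add: mminus_def f fun_eq_iff)
  show "c0_on nv (mminus (mone G) f i j) (carrier G)"
    unfolding D by (intro c0_on_cmult c0_imp_c0_on A)
  have "f i j = (\<lambda>g. mone G i j g + of_nat p * A i j g)" by (simp add: f fun_eq_iff)
  then show "c0_on nv (f i j) (carrier G)"
    using c0_on_add[OF c0_on_mone c0_on_cmult[OF c0_imp_c0_on[OF A(1)], of "of_nat p"]] by simp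
  show "nv (mminus (mone G) f i j g) \<le> 1 / real p"
    using A(2)[of g] p_ge_2 by (simp add: D nv_mult nv_of_nat_p divide_le_eq)
qed

end

theorem proposition4p16:
  fixes G :: "('g, 'c) monoid_scheme" and \<Gamma>s :: "nat \<Rightarrow> 'g set"
    and p :: nat and nv :: "'a::field_char_0 \<Rightarrow> real" and r :: nat
    and f :: "('g, 'a) gmat"
  assumes "group G" and "countable (carrier G)" and "residually_finite G"
    and "tends_to_e G \<Gamma>s"
    and "padic_field p nv"
    and "one_plus_p_int p G nv r f"
  shows "nv_tendsto nv (\<lambda>n. log_det (G Mod \<Gamma>s n) nv r (mreduce nv f)) (log_det G nv r f)"
proof -
  interpret padic_abs p nv by (rule padic_abs.intro) (fact assms(5))
  define D where "D = mminus (mone G) f"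
  note entries = one_plus_p_int_entries[OF assms(6)]
  have "\<Gamma>s n \<lhd> G" for n
    using assms(4) by (simp add: tends_to_e_def)
  then have log_det_Mod_eq: "log_det (G Mod \<Gamma>s n) nv r (mreduce nv f) =
      (\<Sum>i<r. log_series nv (\<lambda>k. nv_sum nv (mpow G nv r D k i i) (\<Gamma>s n)))" for n
    unfolding D_def by (rule log_det_Mod[OF _ entries(1)])
  have "nv_tendsto nv (\<lambda>n. log_series nv (\<lambda>k. nv_sum nv (mpow G nv r D k i i) (\<Gamma>s n)))
      (log_series nv (\<lambda>k. mpow G nv r D k i i \<one>\<^bsub>G\<^esub>))" if i: "i < r" for i
  proof (rule log_series_nv_sum_tends_to_e[OF assms(1,4)])
    show "c0_on nv (mpow G nv r D k i i) (carrier G)" for k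
      using entries(2) i i unfolding D_def by (rule c0_on_mpow[OF assms(1)])
    show "nv (mpow G nv r D k i i g) \<le> (1 / real p) ^ k" if "g \<in> carrier G" for k g
      using entries(2,3) i that unfolding D_def by (intro nv_mpow_le[OF assms(1)]) auto
  qed
  then have "nv_tendsto nv (\<lambda>n. log_det (G Mod \<Gamma>s n) nv r (mreduce nv f))
      (\<Sum>i<r. log_series nv (\<lambda>k. mpow G nv r D k i i \<one>\<^bsub>G\<^esub>))"
    unfolding log_det_Mod_eq by (intro nv_tendsto_sum) auto
  then show ?thesis
    unfolding log_det_eq_log_series[of G] D_def .
qed

end
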